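(* For every real $M\ge1$, $$\mathrm{supp}(F_M)\subseteq\{x\in\mathbb{R}^2:|qx-r|\le|q|^{-\tau}\text{ for some }(q,r)\in\mathbb{Z}^2(M)\times\mathbb{Z}^2\}.$$ Moreover, for any sequence $(M_k)_{k\ge1}$ of real numbers $M_k\ge1$ with $M_k\le M_{k+1}/2$ for all $k\in\mathbb{N}$, $$\bigcap_{k=1}^\infty\mathrm{supp}(F_{M_k})\subseteq E_\ast(\tau).$$
   Context: Identify $\mathbb{R}^2$ with $\mathbb{C}$ (products $qx$ are complex multiplication, $\mathbb{Z}^2$ is the Gaussian integers); $|x|=\max(|x_1|,|x_2|)$. Let $\tau\in\mathbb{R}$, $\tau\neq-1$, $a=2/(1+\tau)$, and fix a positive integer $K>2+a$. Fix a non-negative $C^K$ function $\phi$ on $\mathbb{R}^2$ with $\int\phi=1$ and $\mathrm{supp}(\phi)\subseteq[-1,1]^2$. For $\varepsilon>0$ let $\phi^\varepsilon(x)=\varepsilon^{-2}\phi(x/\varepsilon)$, $\Phi^\varepsilon(x)=\sum_{r\in\mathbb{Z}^2}\phi^\varepsilon(x-r)$, $\Phi^\varepsilon_q(x)=\Phi^\varepsilon(qx)$. For $M>0$ let $\mathbb{Z}^2(M)=\{q\in\mathbb{Z}^2:M/2<|q|\le M\}$, $\varepsilon(M)=\tfrac12M^{-\tau}$, and $F_M=\frac{1}{|\mathbb{Z}^2(M)|}\sum_{q\in\mathbb{Z}^2(M)}\Phi^{\varepsilon(M)}_q$. Define $$E_\ast(\tau)=\{x\in\mathbb{R}^2:|qx-r|\le|q|^{-\tau}\text{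 for infinitely many }(q,r)\in\mathbb{Z}^2\times\mathbb{Z}^2,\ q\neq0\}.$$ *)

theory Defs
  imports "HOL-Analysis.Analysis"
begin

text \<open>R^2 is identified with the complex plane; Z^2 with the Gaussian integers.\<close>

definition ninf :: "complex \<Rightarrow> real" where
  "ninf x = max \<bar>Re x\<bar> \<bar>Im x\<bar>"

definition gauss :: "complex set" where
  "gauss = {z. Re z \<in> \<int> \<and> Im z \<in> \<int>}"

fun Ck :: "nat \<Rightarrow> (complex \<Rightarrow> real) \<Rightarrow> bool" where
  "Ck 0 f = continuous_on UNIV f"
| "Ck (Suc k) f = (\<exists>D1 D2. (\<forall>x. (f has_derivative (\<lambda>h. Re h * D1 x + Im h * D2 x)) (at x))
                        \<and> Ck k D1 \<and> Ck k D2)"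

definition supp :: "(complex \<Rightarrow> real) \<Rightarrow> complex set" where
  "supp f = closure {x. f x \<noteq> 0}"

definition phi_eps :: "(complex \<Rightarrow> real) \<Rightarrow> real \<Rightarrow> complex \<Rightarrow> real" where
  "phi_eps \<phi> \<epsilon> x = \<phi> (x / complex_of_real \<epsilon>) / \<epsilon>\<^sup>2"

definition Phi_eps :: "(complex \<Rightarrow> real) \<Rightarrow> real \<Rightarrow> complex \<Rightarrow> real" where
  "Phi_eps \<phi> \<epsilon> x = (\<Sum>\<^sub>\<infinity>r\<in>gauss. phi_eps \<phi> \<epsilon> (x - r))"

definition ZM :: "real \<Rightarrow> complex set" where
  "ZM M = {q \<in> gauss. M / 2 < ninf q \<and> ninf q \<le> M}"

definition eps :: "real \<Rightarrow> real \<Rightarrow> real" where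
  "eps \<tau> M = (1/2) * M powr (-\<tau>)"

definition F :: "(complex \<Rightarrow> real) \<Rightarrow> real \<Rightarrow> real \<Rightarrow> complex \<Rightarrow> real" where
  "F \<phi> \<tau> M x = (\<Sum>q\<in>ZM M. Phi_eps \<phi> (eps \<tau> M) (q * x)) / real (card (ZM M))"

definition E_star :: "real \<Rightarrow> complex set" where
  "E_star \<tau> = {x. infinite {(q, r). q \<in> gauss \<and> q \<noteq> 0 \<and> r \<in> gauss \<and>
                               ninf (q * x - r) \<le> ninf q powr (-\<tau>)}}"

end

theory Submission
  imports Defs
begin

text \<open>The summand \<open>\<Phi>\<^sup>\<epsilon>(qx)\<close> of \<open>F\<^sub>M\<close> vanishes unless \<open>|qx - r| \<le> \<epsilon>\<close> for some Gaussian integer \<open>r\<close>, and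
  for \<open>q \<in> \<int>\<^sup>2(M)\<close> with \<open>\<tau> > 0\<close> one has \<open>\<epsilon>(M) \<le> M\<^sup>-\<^sup>\<tau> \<le> |q|\<^sup>-\<^sup>\<tau>\<close>; the target set is a finite union of
  closed sets, so it contains the closure of the nonzero set. For \<open>\<tau> \<le> 0\<close> the target set is
  everything, by rounding. If the scales \<open>M\<^sub>k\<close> at least double, the shells \<open>\<int>\<^sup>2(M\<^sub>k)\<close> are pairwise
  disjoint, so a point in every support has infinitely many distinct good denominators.\<close>

definition approx_set :: "real \<Rightarrow> complex set \<Rightarrow> complex set" where
  "approx_set \<tau> Q = {x. \<exists>q\<in>Q. \<exists>r\<in>gauss. ninf (q * x - r) \<le> ninf q powr (-\<tau>)}"

lemma ex_gauss_ninf_le_iff: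
  "(\<exists>r\<in>gauss. ninf (y - r) \<le> c) \<longleftrightarrow> infdist (Re y) \<int> \<le> c \<and> infdist (Im y) \<int> \<le> c"
proof
  assume "\<exists>r\<in>gauss. ninf (y - r) \<le> c"
  then obtain r where r: "r \<in> gauss" "ninf (y - r) \<le> c" by blast
  have "infdist (Re y) \<int> \<le> dist (Re y) (Re r)" "infdist (Im y) \<int> \<le> dist (Im y) (Im r)"
    using r(1) by (auto intro: infdist_le simp: gauss_def)
  with r(2) show "infdist (Re y) \<int> \<le> c \<and> infdist (Im y) \<int> \<le> c"
    by (auto simp: ninf_def dist_real_def)
next
  assume c: "infdist (Re y) \<int> \<le> c \<and> infdist (Im y) \<int> \<le> c"
  have "(\<int>::real set) \<noteq> {}" by auto
  then obtain a b where "a \<in> \<int>" "infdist (Re y) \<int> = dist (Re y) a"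
                    and "b \<in> \<int>" "infdist (Im y) \<int> = dist (Im y) b"
    using infdist_attains_inf[OF closed_Ints] by metis
  with c have "Complex a b \<in> gauss" "ninf (y - Complex a b) \<le> c"
    by (simp_all add: gauss_def ninf_def dist_real_def)
  then show "\<exists>r\<in>gauss. ninf (y - r) \<le> c" by blast
qed

lemma closed_approx_set:
  assumes "finite Q"
  shows "closed (approx_set \<tau> Q)"
proof -
  have "approx_set \<tau> Q = (\<Union>q\<in>Q. {x. infdist (Re (q * x)) \<int> \<le> ninf q powr (-\<tau>)}
                              \<inter> {x. infdist (Im (q * x)) \<int> \<le> ninf q powr (-\<tau>)})"
    by (auto simp: approx_set_def ex_gauss_ninf_le_iff)
  also have "closed \<dots>"
    using assms
    by (intro closed_UN ballI closed_Int closed_Collect_le continuous_on_infdist continuous_intros)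
  finally show ?thesis .
qed

lemma finite_ZM: "finite (ZM M)"
proof (rule finite_subset)
  let ?box = "{-\<lceil>M\<rceil>..\<lceil>M\<rceil>}"
  show "ZM M \<subseteq> (\<lambda>(a, b). Complex (of_int a) (of_int b)) ` (?box \<times> ?box)"
  proof
    fix q assume q: "q \<in> ZM M"
    then obtain a b where ab: "Re q = of_int a" "Im q = of_int b"
      by (auto simp: ZM_def gauss_def elim!: Ints_cases)
    have "\<bar>Re q\<bar> \<le> M" "\<bar>Im q\<bar> \<le> M"
      using q by (auto simp: ZM_def ninf_def)
    with ab have "a \<in> ?box" "b \<in> ?box"
      by (auto simp: abs_le_iff) linarith+
    moreover have "q = Complex (of_int a) (of_int b)"
      using ab by (simp add: complex_eq_iff)
    ultimately show "q \<in> (\<lambda>(a, b). Complex (of_int a) (of_int b)) ` (?box \<times> ?box)"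
      by force
  qed
qed simp

lemma ninf_divide_of_real: "e > 0 \<Longrightarrow> ninf (z / complex_of_real e) = ninf z / e"
  by (simp add: ninf_def Re_divide_of_real Im_divide_of_real max_divide_distrib_right)

lemma ninf_gauss_ge_1:
  assumes "q \<in> gauss" "q \<noteq> 0"
  shows "ninf q \<ge> 1"
proof -
  obtain a b where "Re q = of_int a" "Im q = of_int b"
    using assms(1) by (auto simp: gauss_def elim!: Ints_cases)
  moreover from this assms(2) have "a \<noteq> 0 \<or> b \<noteq> 0"
    by (auto simp: complex_eq_iff)
  ultimately show ?thesis
    by (auto simp: ninf_def max_def)
qed

lemma ex_gauss_ninf_le_half: "\<exists>r\<in>gauss. ninf (y - r) \<le> 1/2"
proof
  let ?r = "Complex (of_int (round (Re y))) (of_int (round (Im y)))"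
  show "?r \<in> gauss" by (simp add: gauss_def)
  show "ninf (y - ?r) \<le> 1/2"
    using of_int_round_abs_le[of "Re y"] of_int_round_abs_le[of "Im y"]
    by (simp add: ninf_def abs_minus_commute)
qed

lemma near_gauss_if_Phi_eps_nonzero:
  assumes supp: "supp \<phi> \<subseteq> {x. ninf x \<le> 1}" and "\<epsilon> > 0" and "Phi_eps \<phi> \<epsilon> y \<noteq> 0"
  shows "\<exists>r\<in>gauss. ninf (y - r) \<le> \<epsilon>"
proof -
  obtain r where r: "r \<in> gauss" "phi_eps \<phi> \<epsilon> (y - r) \<noteq> 0"
    using assms(3) unfolding Phi_eps_def by (meson infsum_0)
  then have "(y - r) / complex_of_real \<epsilon> \<in> supp \<phi>"
    unfolding supp_def phi_eps_def using closure_subset by fastforce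
  with supp \<open>\<epsilon> > 0\<close> have "ninf (y - r) \<le> \<epsilon>"
    by (auto simp: ninf_divide_of_real)
  with r(1) show ?thesis by blast
qed

lemma approx_set_ZM_eq_UNIV:
  assumes "\<tau> \<le> 0" "M \<ge> 1"
  shows "approx_set \<tau> (ZM M) = UNIV"
proof -
  define q where "q = complex_of_int \<lfloor>M\<rfloor>"
  have "1 \<le> \<lfloor>M\<rfloor>"
    using assms(2) by (simp add: le_floor_iff)
  then have "M / 2 < of_int \<lfloor>M\<rfloor>"
    using real_of_int_floor_gt_diff_one[of M] by linarith
  with assms(2) have q: "q \<in> ZM M" "q \<noteq> 0"
    by (auto simp: q_def ZM_def gauss_def ninf_def)
  then have "ninf q powr (-\<tau>) \<ge> 1"
    using assms(1) ninf_gauss_ge_1 by (intro ge_one_powr_ge_zero) (auto simp: ZM_def)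
  then have "x \<in> approx_set \<tau> (ZM M)" for x
    using q(1) ex_gauss_ninf_le_half[of "q * x"] by (force simp: approx_set_def)
  then show ?thesis by blast
qed

lemma supp_F_subset_approx_set:
  assumes supp: "supp \<phi> \<subseteq> {x. ninf x \<le> 1}" and M: "M \<ge> 1"
  shows "supp (F \<phi> \<tau> M) \<subseteq> approx_set \<tau> (ZM M)"
proof (cases "\<tau> > 0")
  case False
  then show ?thesis using approx_set_ZM_eq_UNIV M by simp
next
  case True
  have eps: "eps \<tau> M > 0" using M by (simp add: eps_def)
  have "x \<in> approx_set \<tau> (ZM M)" if "F \<phi> \<tau> M x \<noteq> 0" for x
  proof -
    have "(\<Sum>q\<in>ZM M. Phi_eps \<phi> (eps \<tau> M) (q * x)) \<noteq> 0"
      using \<open>F \<phi> \<tau> M x \<noteq> 0\<close> by (auto simp: F_def)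
    then obtain q where q: "q \<in> ZM M" "Phi_eps \<phi> (eps \<tau> M) (q * x) \<noteq> 0"
      by (meson sum.neutral)
    then obtain r where r: "r \<in> gauss" "ninf (q * x - r) \<le> eps \<tau> M"
      using near_gauss_if_Phi_eps_nonzero[OF supp eps] by blast
    have "0 < ninf q" "ninf q \<le> M" using q(1) M by (auto simp: ZM_def)
    have "eps \<tau> M \<le> M powr (-\<tau>)"
      by (simp add: eps_def)
    also have "\<dots> \<le> ninf q powr (-\<tau>)"
      using True \<open>0 < ninf q\<close> \<open>ninf q \<le> M\<close> by (intro powr_mono2') auto
    finally have "eps \<tau> M \<le> ninf q powr (-\<tau>)" .
    with q(1) r show ?thesis by (force simp: approx_set_def)
  qed
  then show ?thesis
    unfolding supp_def by (intro closure_minimal closed_approx_set finite_ZM subsetI) simp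
qed

lemma ninf_less_if_ZM_lacunary:
  assumes "M \<le> M' / 2" "q \<in> ZM M" "q' \<in> ZM M'"
  shows "ninf q < ninf q'"
  using assms by (auto simp: ZM_def)

lemma E_star_if_approx_at_lacunary_scales:
  assumes lac: "\<forall>k\<ge>1. Ms k \<ge> 1 \<and> Ms k \<le> Ms (Suc k) / 2"
    and x: "\<And>k. k \<ge> 1 \<Longrightarrow> x \<in> approx_set \<tau> (ZM (Ms k))"
  shows "x \<in> E_star \<tau>"
proof -
  have "\<forall>k\<in>{1..}. \<exists>q\<in>ZM (Ms k). \<exists>r\<in>gauss. ninf (q * x - r) \<le> ninf q powr (-\<tau>)"
    using x by (simp add: approx_set_def)
  then obtain q r where qr: "\<And>k. k \<ge> 1 \<Longrightarrow> q k \<in> ZM (Ms k) \<and> r k \<in> gauss \<and>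
                          ninf (q k * x - r k) \<le> ninf (q k) powr (-\<tau>)"
    by (metis atLeast_iff)
  have mono: "Ms k \<le> Ms j" if "1 \<le> k" "k \<le> j" for k j
    using that(2)
  proof (induction j rule: dec_induct)
    case (step j)
    then show ?case using lac[rule_format, of j] that(1) by simp
  qed simp
  have "ninf (q k) < ninf (q j)" if "1 \<le> k" "k < j" for k j
  proof (rule ninf_less_if_ZM_lacunary)
    have "1 \<le> k" "k \<le> j - 1" "Suc (j - 1) = j"
      using that by auto
    then show "Ms k \<le> Ms j / 2"
      using mono[of k "j - 1"] lac[rule_format, of "j - 1"] by (metis order.trans)
  qed (use qr that in auto)
  then have "inj_on q {1..}"
    by (metis atLeast_iff inj_onI less_irrefl linorder_neqE_nat)
  then have "infinite ((\<lambda>k. (q k, r k)) ` {1..})"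
    by (auto simp: finite_image_iff infinite_Ici inj_on_def)
  moreover have "(\<lambda>k. (q k, r k)) ` {1..} \<subseteq> {(q, r). q \<in> gauss \<and> q \<noteq> 0 \<and> r \<in> gauss \<and>
                                           ninf (q * x - r) \<le> ninf q powr (-\<tau>)}"
    using qr lac by (force simp: ZM_def ninf_def)
  ultimately show ?thesis
    unfolding E_star_def using finite_subset by blast
qed

theorem lemma4:
  fixes \<tau> :: real and K :: nat and \<phi> :: "complex \<Rightarrow> real"
  assumes "\<tau> \<noteq> -1"
    and "real K > 2 + 2 / (1 + \<tau>)"
    and "K > 0"
    and "\<forall>x. \<phi> x \<ge> 0"
    and "Ck K \<phi>"
    and "(\<phi> has_integral 1) UNIV"
    and "supp \<phi> \<subseteq> {x. ninf x \<le> 1}"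
  shows "(\<forall>M::real. M \<ge> 1 \<longrightarrow>
           supp (F \<phi> \<tau> M) \<subseteq>
             {x. \<exists>q\<in>ZM M. \<exists>r\<in>gauss. ninf (q * x - r) \<le> ninf q powr (-\<tau>)})
       \<and> (\<forall>Ms :: nat \<Rightarrow> real. (\<forall>k\<ge>1. Ms k \<ge> 1 \<and> Ms k \<le> Ms (Suc k) / 2) \<longrightarrow>
           (\<Inter>k\<in>{1..}. supp (F \<phi> \<tau> (Ms k))) \<subseteq> E_star \<tau>)"
proof (intro conjI allI impI)
  fix M :: real
  assume "M \<ge> 1"
  then show "supp (F \<phi> \<tau> M) \<subseteq>
      {x. \<exists>q\<in>ZM M. \<exists>r\<in>gauss. ninf (q * x - r) \<le> ninf q powr (-\<tau>)}"
    using supp_F_subset_approx_set[OF assms(7)] by (simp add: approx_set_def)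
next
  fix Ms :: "nat \<Rightarrow> real"
  assume lac: "\<forall>k\<ge>1. Ms k \<ge> 1 \<and> Ms k \<le> Ms (Suc k) / 2"
  show "(\<Inter>k\<in>{1..}. supp (F \<phi> \<tau> (Ms k))) \<subseteq> E_star \<tau>"
  proof
    fix x
    assume "x \<in> (\<Inter>k\<in>{1..}. supp (F \<phi> \<tau> (Ms k)))"
    then have "x \<in> approx_set \<tau> (ZM (Ms k))" if "k \<ge> 1" for k
      using supp_F_subset_approx_set[OF assms(7)] lac that by blast
    with lac show "x \<in> E_star \<tau>"
      by (rule E_star_if_approx_at_lacunary_scales)
  qed
qed

end
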